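(* Let $N\ge2$, $d\ge1$, and let $\Sigma\subset\mathbb{Z}_N^d$ be a nonempty Salem set at level $\Lambda_{\text{Salem}}$ with $\mathrm{dens}(\Sigma)=N^{-d}|\Sigma|<1$. Then for every $f:\mathbb{Z}_N^d\to\mathbb{C}$ whose Fourier transform $\hat f$ is supported in $\Sigma$, $$\Big(\frac{1}{|\Sigma|}\sum_{m\in\Sigma}|\hat f(m)|^2\Big)^{1/2}\le \frac{N^{-d}\,|\Sigma|^{-1/4}\,\Lambda_{\text{Salem}}^{1/2}\sum_{x\in\mathbb{Z}_N^d}|f(x)|}{\sqrt{1-\mathrm{dens}(\Sigma)}}.$$
   Context: $\chi(t)=e^{2\pi i t/N}$, $\hat f(m)=N^{-d}\sum_{x}\chi(-x\cdot m)f(x)$. Sets are identified with indicator functions, so $\hat S(z)=N^{-d}\sum_{x\in S}\chi(-x\cdot z)$. A set $S\subset\mathbb{Z}_N^d$ is a Salem set at level $\Lambda_{\text{Salem}}$ if $|\hat S(z)|\le \Lambda_{\text{Salem}}N^{-d}|S|^{1/2}$ for all $z\ne0$. *)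

theory Defs
  imports "HOL-Analysis.Analysis"
begin

text \<open>Z_N^d is modelled as functions nat => nat with coordinates below N for
indices i < d and value 0 for indices i >= d.\<close>
definition ZNd :: "nat \<Rightarrow> nat \<Rightarrow> (nat \<Rightarrow> nat) set" where
  "ZNd N d = {x. (\<forall>i<d. x i < N) \<and> (\<forall>i\<ge>d. x i = 0)}"

definition dotp :: "nat \<Rightarrow> (nat \<Rightarrow> nat) \<Rightarrow> (nat \<Rightarrow> nat) \<Rightarrow> int" where
  "dotp d x m = (\<Sum>i<d. int (x i) * int (m i))"

definition chi :: "nat \<Rightarrow> int \<Rightarrow> complex" where
  "chi N t = exp (2 * of_real pi * \<i> * of_int t / of_nat N)"

definition fourier :: "nat \<Rightarrow> nat \<Rightarrow> ((nat \<Rightarrow> nat) \<Rightarrow> complex) \<Rightarrow> (nat \<Rightarrow> nat) \<Rightarrow> complex" where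
  "fourier N d f m = (1 / of_nat N ^ d) * (\<Sum>x\<in>ZNd N d. chi N (- dotp d x m) * f x)"

definition indic_set :: "(nat \<Rightarrow> nat) set \<Rightarrow> (nat \<Rightarrow> nat) \<Rightarrow> complex" where
  "indic_set S x = (if x \<in> S then 1 else 0)"

definition salem :: "nat \<Rightarrow> nat \<Rightarrow> (nat \<Rightarrow> nat) set \<Rightarrow> real \<Rightarrow> bool" where
  "salem N d S \<Lambda> \<longleftrightarrow> (\<forall>z\<in>ZNd N d. z \<noteq> (\<lambda>_. 0) \<longrightarrow>
      cmod (fourier N d (indic_set S) z) \<le> \<Lambda> * (1 / real N ^ d) * sqrt (real (card S)))"

definition dens :: "nat \<Rightarrow> nat \<Rightarrow> (nat \<Rightarrow> nat) set \<Rightarrow> real" where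
  "dens N d S = real (card S) / real N ^ d"

end

theory Submission
  imports Defs
begin

text \<open>Expanding \<open>|f^(m)|^2\<close> and summing over \<open>m \<in> \<Sigma>\<close> gives
  \<open>N^(-2d) \<Sum>x,y f(x) conj(f(y)) S(x,y)\<close> with the character sum \<open>S(x,y) = \<Sum>m\<in>\<Sigma> \<chi>((y - x)\<cdot>m)\<close>.
  On the diagonal \<open>S = |\<Sigma>|\<close>; off it \<open>S(x,y) = N^d \<Sigma>^(x - y)\<close>, so the Salem property bounds the
  off-diagonal part by \<open>\<Lambda> |\<Sigma>|^(1/2) (\<Sum>|f|)^2\<close>. The diagonal part is \<open>|\<Sigma>| \<Sum>|f|^2\<close>, which by
  Plancherel and the support condition equals \<open>|\<Sigma>| N^d \<Sum>m\<in>\<Sigma> |f^(m)|^2\<close>; moving it to the left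
  leaves the factor \<open>1 - dens(\<Sigma>)\<close>.\<close>

lemma chi_add: "chi N (a + b) = chi N a * chi N b"
  unfolding chi_def by (simp add: exp_add[symmetric] add_divide_distrib ring_distribs)

lemma chi_0 [simp]: "chi N 0 = 1"
  unfolding chi_def by simp

lemma cnj_chi: "cnj (chi N a) = chi N (- a)"
  unfolding chi_def by (simp add: exp_cnj)

lemma chi_minus_mult_self: "chi N (- a) * chi N a = 1"
  by (metis chi_0 chi_add add.left_inverse)

lemma chi_eq_1_iff:
  assumes "N > 0"
  shows "chi N t = 1 \<longleftrightarrow> int N dvd t"
proof -
  have "chi N t = 1 \<longleftrightarrow> (\<exists>n::int. 2 * pi * t / N = of_int (2 * n) * pi)"
    unfolding chi_def exp_eq_1 by simp
  also have "\<dots> \<longleftrightarrow> (\<exists>n::int. real_of_int t = real N * of_int n)"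
    using assms by (auto simp: field_simps)
  also have "\<dots> \<longleftrightarrow> int N dvd t"
    by (metis dvd_def of_int_eq_iff of_int_mult of_int_of_nat_eq)
  finally show ?thesis .
qed

lemma chi_power: "chi N a ^ k = chi N (a * int k)"
  by (induct k) (simp_all add: chi_add ring_distribs mult.commute)

lemma chi_sum: "chi N (\<Sum>i\<in>A. h i) = (\<Prod>i\<in>A. chi N (h i))"
  by (induct A rule: infinite_finite_induct) (simp_all add: chi_add)

lemma sum_chi_mult_eq_0:
  assumes "N > 0" "\<not> int N dvd a"
  shows "(\<Sum>k<N. chi N (a * int k)) = 0"
proof -
  have w: "chi N a \<noteq> 1" using chi_eq_1_iff[OF assms(1)] assms(2) by simp
  have "(\<Sum>k<N. chi N (a * int k)) = (\<Sum>k<N. chi N a ^ k)" by (simp add: chi_power)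
  also have "\<dots> = (chi N a ^ N - 1) / (chi N a - 1)" by (rule geometric_sum[OF w])
  also have "chi N a ^ N = 1" using chi_eq_1_iff[OF assms(1)] by (simp add: chi_power)
  finally show ?thesis by simp
qed

lemma ZNd_0: "ZNd N 0 = {\<lambda>_. 0}"
  unfolding ZNd_def by auto

lemma ZNd_Suc: "ZNd N (Suc d) = (\<lambda>(x,k). x(d:=k)) ` (ZNd N d \<times> {..<N})"
proof (rule set_eqI)
  fix m
  show "m \<in> ZNd N (Suc d) \<longleftrightarrow> m \<in> (\<lambda>(x,k). x(d:=k)) ` (ZNd N d \<times> {..<N})"
  proof
    assume m: "m \<in> ZNd N (Suc d)"
    hence "(m(d:=0), m d) \<in> ZNd N d \<times> {..<N}" unfolding ZNd_def by auto
    moreover have "m = (\<lambda>(x,k). x(d:=k)) (m(d:=0), m d)" by simp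
    ultimately show "m \<in> (\<lambda>(x,k). x(d:=k)) ` (ZNd N d \<times> {..<N})" by blast
  next
    assume "m \<in> (\<lambda>(x,k). x(d:=k)) ` (ZNd N d \<times> {..<N})"
    then obtain x k where "x \<in> ZNd N d" "k < N" "m = x(d:=k)" by auto
    thus "m \<in> ZNd N (Suc d)" unfolding ZNd_def by (auto simp: less_Suc_eq)
  qed
qed

lemma inj_on_ZNd_Suc: "inj_on (\<lambda>(x,k). x(d:=k)) (ZNd N d \<times> {..<N})"
proof (rule inj_onI, clarsimp)
  fix x k y l
  assume "x \<in> ZNd N d" "y \<in> ZNd N d" "x(d := k) = y(d := l)"
  moreover have "x d = 0" "y d = 0" using calculation unfolding ZNd_def by auto
  ultimately show "x = y \<and> k = l"
    by (metis fun_upd_idem fun_upd_same fun_upd_upd)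
qed

lemma finite_ZNd: "finite (ZNd N d)"
  by (induct d) (simp_all add: ZNd_0 ZNd_Suc)

lemma ZNd_eqI:
  assumes "x \<in> ZNd N d" "y \<in> ZNd N d" "\<forall>i<d. x i = y i"
  shows "x = y"
proof
  fix i show "x i = y i" using assms unfolding ZNd_def by (cases "i < d") auto
qed

lemma sum_ZNd_prod:
  "(\<Sum>m\<in>ZNd N d. \<Prod>i<d. (g i (m i) :: complex)) = (\<Prod>i<d. \<Sum>k<N. g i k)"
proof (induct d)
  case 0 thus ?case by (simp add: ZNd_0)
next
  case (Suc d)
  have "(\<Sum>m\<in>ZNd N (Suc d). \<Prod>i<Suc d. g i (m i))
      = (\<Sum>p\<in>ZNd N d \<times> {..<N}. \<Prod>i<Suc d. g i (((\<lambda>(x,k). x(d:=k)) p) i))"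
    unfolding ZNd_Suc by (rule sum.reindex[OF inj_on_ZNd_Suc, unfolded comp_def])
  also have "\<dots> = (\<Sum>(x,k)\<in>ZNd N d \<times> {..<N}. (\<Prod>i<d. g i (x i)) * g d k)"
    by (intro sum.cong refl) (auto simp: prod.lessThan_Suc intro!: prod.cong)
  also have "\<dots> = (\<Sum>x\<in>ZNd N d. \<Sum>k<N. (\<Prod>i<d. g i (x i)) * g d k)"
    by (rule sum.cartesian_product[symmetric])
  also have "\<dots> = (\<Sum>x\<in>ZNd N d. \<Prod>i<d. g i (x i)) * (\<Sum>k<N. g d k)"
    by (simp add: sum_distrib_right sum_distrib_left[symmetric])
  also have "\<dots> = (\<Prod>i<Suc d. \<Sum>k<N. g i k)" by (simp add: Suc prod.lessThan_Suc)
  finally show ?case .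
qed

lemma not_int_dvd_diff:
  assumes "a < N" "b < N" "a \<noteq> b"
  shows "\<not> int N dvd (int a - int b)"
proof
  assume "int N dvd (int a - int b)"
  moreover have "int a - int b \<noteq> 0" using assms by simp
  ultimately have "\<bar>int N\<bar> \<le> \<bar>int a - int b\<bar>" using dvd_imp_le_int by blast
  thus False using assms by linarith
qed

definition char_sum :: "nat \<Rightarrow> nat \<Rightarrow> (nat \<Rightarrow> nat) set \<Rightarrow> (nat \<Rightarrow> nat) \<Rightarrow> (nat \<Rightarrow> nat) \<Rightarrow> complex"
  where "char_sum N d T x y = (\<Sum>m\<in>T. chi N (- dotp d x m) * chi N (dotp d y m))"

lemma char_sum_diag: "char_sum N d T x x = of_nat (card T)"
  unfolding char_sum_def by (simp add: chi_minus_mult_self)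

lemma char_sum_ZNd:
  assumes "N > 0" "x \<in> ZNd N d" "y \<in> ZNd N d"
  shows "char_sum N d (ZNd N d) x y = (if x = y then of_nat N ^ d else 0)"
proof -
  have prod_form: "chi N (- dotp d x m) * chi N (dotp d y m)
      = (\<Prod>i<d. chi N ((int (y i) - int (x i)) * int (m i)))" for m
  proof -
    have "- dotp d x m + dotp d y m = (\<Sum>i<d. (int (y i) - int (x i)) * int (m i))"
      unfolding dotp_def by (simp add: sum_negf[symmetric] sum.distrib[symmetric] algebra_simps)
    thus ?thesis by (simp add: chi_add[symmetric] chi_sum)
  qed
  have "char_sum N d (ZNd N d) x y = (\<Prod>i<d. \<Sum>k<N. chi N ((int (y i) - int (x i)) * int k))"
    unfolding char_sum_def prod_form by (rule sum_ZNd_prod)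
  also have "\<dots> = (if x = y then of_nat N ^ d else 0)"
  proof (cases "x = y")
    case True thus ?thesis by simp
  next
    case False
    then obtain i where i: "i < d" "x i \<noteq> y i" using ZNd_eqI[OF assms(2,3)] by blast
    have "y i < N" "x i < N" using i assms unfolding ZNd_def by auto
    hence "(\<Sum>k<N. chi N ((int (y i) - int (x i)) * int k)) = 0"
      using sum_chi_mult_eq_0[OF assms(1)] not_int_dvd_diff i by metis
    thus ?thesis using False i by (intro trans[OF prod_zero]) auto
  qed
  finally show ?thesis .
qed

lemma sum_cmod_fourier_sq:
  assumes "finite T"
  shows "complex_of_real (\<Sum>m\<in>T. (cmod (fourier N d f m))\<^sup>2)
    = (1 / of_nat N ^ d)\<^sup>2 * (\<Sum>x\<in>ZNd N d. \<Sum>y\<in>ZNd N d. f x * cnj (f y) * char_sum N d T x y)"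
proof -
  let ?c = "1 / (of_nat N ^ d :: complex)"
  let ?e = "\<lambda>x y m. chi N (- dotp d x m) * chi N (dotp d y m)"
  have "complex_of_real ((cmod (fourier N d f m))\<^sup>2)
      = ?c\<^sup>2 * (\<Sum>x\<in>ZNd N d. \<Sum>y\<in>ZNd N d. f x * cnj (f y) * ?e x y m)" for m
  proof -
    have "complex_of_real ((cmod (fourier N d f m))\<^sup>2) = fourier N d f m * cnj (fourier N d f m)"
      by (rule complex_norm_square)
    also have "\<dots> = ?c\<^sup>2 * ((\<Sum>x\<in>ZNd N d. chi N (- dotp d x m) * f x)
                  * (\<Sum>y\<in>ZNd N d. chi N (dotp d y m) * cnj (f y)))"
      unfolding fourier_def by (simp add: cnj_chi power2_eq_square)
    finally show ?thesis by (simp add: sum_product mult_ac)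
  qed
  hence "complex_of_real (\<Sum>m\<in>T. (cmod (fourier N d f m))\<^sup>2)
      = ?c\<^sup>2 * (\<Sum>m\<in>T. \<Sum>x\<in>ZNd N d. \<Sum>y\<in>ZNd N d. f x * cnj (f y) * ?e x y m)"
    by (simp add: sum_distrib_left)
  also have "\<dots> = ?c\<^sup>2 * (\<Sum>x\<in>ZNd N d. \<Sum>y\<in>ZNd N d. \<Sum>m\<in>T. f x * cnj (f y) * ?e x y m)"
    by (subst sum.swap, rule arg_cong[where f="\<lambda>z. ?c\<^sup>2 * z"], rule sum.cong[OF refl], rule sum.swap)
  finally show ?thesis by (simp add: char_sum_def sum_distrib_left)
qed

lemma plancherel_ZNd:
  assumes "N > 0"
  shows "(\<Sum>m\<in>ZNd N d. (cmod (fourier N d f m))\<^sup>2) = (\<Sum>x\<in>ZNd N d. (cmod (f x))\<^sup>2) / real N ^ d"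
proof -
  have "complex_of_real (\<Sum>m\<in>ZNd N d. (cmod (fourier N d f m))\<^sup>2)
      = (1 / of_nat N ^ d)\<^sup>2 * (\<Sum>x\<in>ZNd N d. \<Sum>y\<in>ZNd N d. f x * cnj (f y)
          * (if x = y then of_nat N ^ d else 0))"
    unfolding sum_cmod_fourier_sq[OF finite_ZNd]
    by (intro arg_cong2[where f="(*)"] refl sum.cong) (simp_all add: char_sum_ZNd[OF assms])
  also have "\<dots> = (\<Sum>x\<in>ZNd N d. f x * cnj (f x)) / of_nat N ^ d"
    using assms by (simp add: if_distrib power2_eq_square sum_distrib_left sum_divide_distrib
        sum.delta'[OF finite_ZNd] cong: if_cong)
  also have "\<dots> = complex_of_real (\<Sum>x\<in>ZNd N d. (cmod (f x))\<^sup>2) / of_nat N ^ d"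
    unfolding of_real_sum by (simp only: complex_norm_square)
  also have "\<dots> = complex_of_real ((\<Sum>x\<in>ZNd N d. (cmod (f x))\<^sup>2) / real N ^ d)"
    by simp
  finally show ?thesis by (simp only: of_real_eq_iff)
qed

lemma dotp_commute: "dotp d x m = dotp d m x"
  unfolding dotp_def by (simp add: mult.commute)

definition ZNd_diff :: "nat \<Rightarrow> nat \<Rightarrow> (nat \<Rightarrow> nat) \<Rightarrow> (nat \<Rightarrow> nat) \<Rightarrow> nat \<Rightarrow> nat"
  where "ZNd_diff N d x y = (\<lambda>i. if i < d then nat ((int (x i) - int (y i)) mod int N) else 0)"

lemma int_ZNd_diff:
  assumes "N > 0" "i < d"
  shows "int (ZNd_diff N d x y i) = (int (x i) - int (y i)) mod int N"
  using assms by (simp add: ZNd_diff_def)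

lemma ZNd_diff_in_ZNd: "N > 0 \<Longrightarrow> ZNd_diff N d x y \<in> ZNd N d"
  unfolding ZNd_def ZNd_diff_def by (auto simp: nat_less_iff)

lemma ZNd_diff_nonzero:
  assumes "N > 0" "x \<in> ZNd N d" "y \<in> ZNd N d" "x \<noteq> y"
  shows "ZNd_diff N d x y \<noteq> (\<lambda>_. 0)"
proof -
  obtain i where i: "i < d" "x i \<noteq> y i" using ZNd_eqI[OF assms(2,3)] assms(4) by blast
  have "x i < N" "y i < N" using i assms unfolding ZNd_def by auto
  hence "\<not> int N dvd (int (x i) - int (y i))" using not_int_dvd_diff i by metis
  hence "int (ZNd_diff N d x y i) \<noteq> 0"
    using int_ZNd_diff[OF assms(1) i(1)] by (simp add: dvd_eq_mod_eq_0)
  thus ?thesis by (metis of_nat_0)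
qed

lemma chi_dotp_ZNd_diff:
  assumes "N > 0"
  shows "chi N (- dotp d x m) * chi N (dotp d y m) = chi N (- dotp d (ZNd_diff N d x y) m)"
proof -
  define q where "q = (\<Sum>i<d. ((int (x i) - int (y i)) div int N) * int (m i))"
  have "dotp d (ZNd_diff N d x y) m
      = (\<Sum>i<d. ((int (x i) - int (y i)) - int N * ((int (x i) - int (y i)) div int N)) * int (m i))"
    unfolding dotp_def
    by (intro sum.cong refl) (simp add: int_ZNd_diff[OF assms] minus_div_mult_eq_mod[symmetric])
  also have "\<dots> = dotp d x m - dotp d y m - int N * q"
    unfolding dotp_def q_def by (simp add: algebra_simps sum_subtractf sum_distrib_left sum.distrib)
  finally have "- dotp d (ZNd_diff N d x y) m = (- dotp d x m + dotp d y m) + int N * q" by simp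
  hence "chi N (- dotp d (ZNd_diff N d x y) m) = chi N (- dotp d x m + dotp d y m) * chi N (int N * q)"
    by (simp only: chi_add)
  moreover have "chi N (int N * q) = 1" using chi_eq_1_iff[OF assms] by simp
  ultimately show ?thesis by (simp add: chi_add[symmetric])
qed

lemma char_sum_eq_fourier_indic_set:
  assumes "N > 0" "\<Sigma> \<subseteq> ZNd N d"
  shows "char_sum N d \<Sigma> x y = of_nat N ^ d * fourier N d (indic_set \<Sigma>) (ZNd_diff N d x y)"
proof -
  have "char_sum N d \<Sigma> x y = (\<Sum>m\<in>ZNd N d. chi N (- dotp d (ZNd_diff N d x y) m) * indic_set \<Sigma> m)"
    unfolding char_sum_def
    by (rule sym, rule sum.mono_neutral_cong_right[OF finite_ZNd assms(2)])
       (auto simp: indic_set_def chi_dotp_ZNd_diff[OF assms(1)])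
  thus ?thesis unfolding fourier_def using assms(1) by (simp add: dotp_commute)
qed

lemma norm_char_sum_le_salem:
  assumes "N > 0" "\<Sigma> \<subseteq> ZNd N d" "salem N d \<Sigma> \<Lambda>"
    and "x \<in> ZNd N d" "y \<in> ZNd N d" "x \<noteq> y"
  shows "cmod (char_sum N d \<Sigma> x y) \<le> \<Lambda> * sqrt (real (card \<Sigma>))"
proof -
  let ?z = "ZNd_diff N d x y"
  have "cmod (char_sum N d \<Sigma> x y) = real N ^ d * cmod (fourier N d (indic_set \<Sigma>) ?z)"
    unfolding char_sum_eq_fourier_indic_set[OF assms(1,2)] by (simp add: norm_mult norm_power)
  also have "\<dots> \<le> real N ^ d * (\<Lambda> * (1 / real N ^ d) * sqrt (real (card \<Sigma>)))"
    using assms ZNd_diff_in_ZNd ZNd_diff_nonzero unfolding salem_def by (intro mult_left_mono) auto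
  also have "\<dots> = \<Lambda> * sqrt (real (card \<Sigma>))" using assms(1) by simp
  finally show ?thesis .
qed
lemma salem_level_nonneg:
  assumes "N \<ge> 2" "d \<ge> 1" "\<Sigma> \<subseteq> ZNd N d" "\<Sigma> \<noteq> {}" "salem N d \<Sigma> \<Lambda>"
  shows "\<Lambda> \<ge> 0"
proof -
  define z :: "nat \<Rightarrow> nat" where "z = (\<lambda>i. if i = 0 then 1 else 0)"
  have "z \<in> ZNd N d" "z \<noteq> (\<lambda>_. 0)" unfolding ZNd_def z_def using assms(1,2)
    by (auto dest: fun_cong[where x=0])
  hence "0 \<le> \<Lambda> * (1 / real N ^ d * sqrt (real (card \<Sigma>)))" using assms(5) unfolding salem_def
    by (metis (no_types) mult.assoc norm_ge_zero order_trans)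
  moreover have "card \<Sigma> > 0"
    using assms(3,4) finite_subset[OF _ finite_ZNd] by (simp add: card_gt_0_iff)
  hence "1 / real N ^ d * sqrt (real (card \<Sigma>)) > 0" using assms(1) by simp
  ultimately show ?thesis by (metis mult_neg_pos not_le)
qed

lemma norm_sesquilinear_sum_le:
  fixes f :: "'a \<Rightarrow> complex"
  assumes "\<And>x y. x \<in> A \<Longrightarrow> y \<in> A \<Longrightarrow> cmod (D x y) \<le> B"
  shows "cmod (\<Sum>x\<in>A. \<Sum>y\<in>A. f x * cnj (f y) * D x y) \<le> B * (\<Sum>x\<in>A. cmod (f x))\<^sup>2"
proof -
  have "cmod (\<Sum>x\<in>A. \<Sum>y\<in>A. f x * cnj (f y) * D x y)
      \<le> (\<Sum>x\<in>A. \<Sum>y\<in>A. cmod (f x * cnj (f y) * D x y))"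
    by (rule order_trans[OF norm_sum sum_mono[OF norm_sum]])
  also have "\<dots> \<le> (\<Sum>x\<in>A. \<Sum>y\<in>A. cmod (f x) * cmod (f y) * B)"
    by (intro sum_mono) (simp add: norm_mult assms mult_left_mono)
  also have "\<dots> = B * (\<Sum>x\<in>A. cmod (f x))\<^sup>2"
    by (simp add: power2_eq_square sum_product sum_distrib_left mult_ac)
  finally show ?thesis .
qed

lemma sum_cmod_fourier_sq_le_salem:
  assumes "N > 0" "\<Sigma> \<subseteq> ZNd N d" "salem N d \<Sigma> \<Lambda>" "\<Lambda> \<ge> 0"
  shows "(\<Sum>m\<in>\<Sigma>. (cmod (fourier N d f m))\<^sup>2)
    \<le> (real (card \<Sigma>) * (\<Sum>x\<in>ZNd N d. (cmod (f x))\<^sup>2)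
        + \<Lambda> * sqrt (real (card \<Sigma>)) * (\<Sum>x\<in>ZNd N d. cmod (f x))\<^sup>2) / (real N ^ d)\<^sup>2"
proof -
  let ?X = "ZNd N d"
  define K where "K = real (card \<Sigma>)"
  define Q where "Q = (\<Sum>x\<in>?X. (cmod (f x))\<^sup>2)"
  define D where "D x y = char_sum N d \<Sigma> x y - (if x = y then of_real K else 0)" for x y
  define E where "E = (\<Sum>x\<in>?X. \<Sum>y\<in>?X. f x * cnj (f y) * D x y)"
  have diagonal: "(\<Sum>x\<in>?X. \<Sum>y\<in>?X. f x * cnj (f y) * (if x = y then of_real K else 0))
      = of_real (K * Q)"
  proof -
    have "complex_of_real Q = (\<Sum>x\<in>?X. f x * cnj (f x))"
      unfolding Q_def of_real_sum by (simp only: complex_norm_square)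
    thus ?thesis
      by (simp add: if_distrib sum_distrib_left mult_ac sum.delta'[OF finite_ZNd] cong: if_cong)
  qed
  have "complex_of_real (\<Sum>m\<in>\<Sigma>. (cmod (fourier N d f m))\<^sup>2)
      = (1 / of_nat N ^ d)\<^sup>2 * (\<Sum>x\<in>?X. \<Sum>y\<in>?X. f x * cnj (f y) * char_sum N d \<Sigma> x y)"
    using sum_cmod_fourier_sq finite_subset[OF assms(2) finite_ZNd] by blast
  also have "\<dots> = complex_of_real ((1 / real N ^ d)\<^sup>2) * (of_real (K * Q) + E)"
    unfolding E_def D_def diagonal[symmetric]
    by (simp add: sum.distrib[symmetric] algebra_simps)
  finally have "(\<Sum>m\<in>\<Sigma>. (cmod (fourier N d f m))\<^sup>2)
      = Re (complex_of_real ((1 / real N ^ d)\<^sup>2) * (of_real (K * Q) + E))"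
    by (metis Re_complex_of_real)
  also have "\<dots> = (K * Q + Re E) / (real N ^ d)\<^sup>2"
    by (simp add: power_one_over)
  finally have "(\<Sum>m\<in>\<Sigma>. (cmod (fourier N d f m))\<^sup>2) = (K * Q + Re E) / (real N ^ d)\<^sup>2" .
  moreover have "Re E \<le> \<Lambda> * sqrt K * (\<Sum>x\<in>?X. cmod (f x))\<^sup>2"
  proof -
    have "cmod (D x y) \<le> \<Lambda> * sqrt K" if "x \<in> ?X" "y \<in> ?X" for x y
      using norm_char_sum_le_salem[OF assms(1-3) that] assms(4)
      by (cases "x = y") (simp_all add: D_def K_def char_sum_diag)
    thus ?thesis unfolding E_def
      by (intro order_trans[OF complex_Re_le_cmod norm_sesquilinear_sum_le]) blast
  qed
  ultimately show ?thesis unfolding K_def Q_def by (simp add: divide_right_mono)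
qed

lemma sqrt_mean_le_of_energy_bound:
  fixes A K M L F :: real
  assumes "0 < K" "K < M" "0 \<le> L" "0 \<le> F"
    and "A \<le> (K * (M * A) + L * sqrt K * F\<^sup>2) / M\<^sup>2"
  shows "sqrt (1 / K * A) \<le> 1 / M * K powr (-1/4) * sqrt L * F / sqrt (1 - K / M)"
proof -
  define \<delta> where "\<delta> = 1 - K / M"
  have M: "M > 0" and \<delta>: "\<delta> > 0" using assms(1,2) by (simp_all add: \<delta>_def)
  have "A * \<delta> * M\<^sup>2 = A * M\<^sup>2 - K * M * A"
    unfolding \<delta>_def using M by (simp add: field_simps power2_eq_square)
  also have "\<dots> \<le> L * sqrt K * F\<^sup>2" using assms(5) M by (simp add: field_simps)
  finally have "A * \<delta> * M\<^sup>2 * sqrt K \<le> L * sqrt K * F\<^sup>2 * sqrt K"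
    by (rule mult_right_mono) (use assms(1) in simp)
  also have "\<dots> = K * (L * F\<^sup>2)" using assms(1) by (simp add: mult_ac)
  finally have "1 / K * A \<le> L * F\<^sup>2 / (M\<^sup>2 * sqrt K * \<delta>)"
    using assms(1) M \<delta> by (simp add: field_simps)
  hence "sqrt (1 / K * A) \<le> sqrt (L * F\<^sup>2 / (M\<^sup>2 * sqrt K * \<delta>))"
    by (rule real_sqrt_le_mono)
  also have "\<dots> = 1 / M * K powr (-1/4) * sqrt L * F / sqrt \<delta>"
  proof -
    have "K powr (-1/4) = 1 / sqrt (sqrt K)"
      using assms(1) by (simp add: powr_minus_divide sqrt_def root_powr_inverse powr_powr)
    thus ?thesis using M assms(1,3,4) \<delta> by (simp add: real_sqrt_mult real_sqrt_divide)
  qed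
  finally show ?thesis unfolding \<delta>_def .
qed

theorem mainTheorem4:
  fixes N d :: nat and \<Sigma> :: "(nat \<Rightarrow> nat) set" and \<Lambda> :: real
    and f :: "(nat \<Rightarrow> nat) \<Rightarrow> complex"
  assumes "N \<ge> 2" and "d \<ge> 1"
    and "\<Sigma> \<subseteq> ZNd N d" and "\<Sigma> \<noteq> {}"
    and "salem N d \<Sigma> \<Lambda>"
    and "dens N d \<Sigma> < 1"
    and "\<forall>m\<in>ZNd N d - \<Sigma>. fourier N d f m = 0"
  shows "sqrt ((1 / real (card \<Sigma>)) * (\<Sum>m\<in>\<Sigma>. (cmod (fourier N d f m))\<^sup>2))
         \<le> (1 / real N ^ d) * real (card \<Sigma>) powr (-1/4) * sqrt \<Lambda>
             * (\<Sum>x\<in>ZNd N d. cmod (f x)) / sqrt (1 - dens N d \<Sigma>)"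
proof -
  let ?A = "\<Sum>m\<in>\<Sigma>. (cmod (fourier N d f m))\<^sup>2"
  let ?F = "\<Sum>x\<in>ZNd N d. cmod (f x)"
  have N: "N > 0" using assms(1) by simp
  have \<Lambda>: "\<Lambda> \<ge> 0" using salem_level_nonneg assms(1-5) .
  have K: "real (card \<Sigma>) > 0"
    using assms(3,4) finite_subset[OF _ finite_ZNd] by (simp add: card_gt_0_iff)
  have dens: "dens N d \<Sigma> = real (card \<Sigma>) / real N ^ d" by (simp add: dens_def)
  have KM: "real (card \<Sigma>) < real N ^ d" using assms(6) N by (simp add: dens)
  have "(\<Sum>m\<in>ZNd N d. (cmod (fourier N d f m))\<^sup>2) = ?A"
    by (rule sum.mono_neutral_right[OF finite_ZNd assms(3)]) (use assms(7) in auto)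
  hence "(\<Sum>x\<in>ZNd N d. (cmod (f x))\<^sup>2) = real N ^ d * ?A"
    using plancherel_ZNd[OF N, of d f] N by (simp add: field_simps)
  hence "?A \<le> (real (card \<Sigma>) * (real N ^ d * ?A) + \<Lambda> * sqrt (real (card \<Sigma>)) * ?F\<^sup>2)
      / (real N ^ d)\<^sup>2"
    using sum_cmod_fourier_sq_le_salem[OF N assms(3,5) \<Lambda>, of f] by simp
  from sqrt_mean_le_of_energy_bound[OF K KM \<Lambda> sum_nonneg this]
  show ?thesis unfolding dens by simp
qed

end
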